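(* Suppose Assumptions (A1), (A2) and (LIN) hold, $f$ is Lipschitz continuous with constant $L_f$, and $x\in\mathcal{X}$ is such that $y^*(x)$ is a single point. Then $$|\widetilde\phi_t(x)-\phi(x)|\le L_f\,\frac{kt}{\tau(x)\,\|\nabla_y g(x,y^*(x))\|}\quad\text{for all }t>0,$$ where $\tau(x):=\inf_{y\in\mathcal{Y}(x),\,y\neq y^*(x)}\cos\angle\big(\nabla_y g(x,y^*(x)),\,y-y^*(x)\big)>0$.
   Context: Let $f,g,h_1,\dots,h_k:\mathbb{R}^n\times\mathbb{R}^m\to\mathbb{R}$ and $\mathcal{X}\subseteq\mathbb{R}^n$. For $x\in\mathcal{X}$ let $\mathcal{Y}(x)=\{y: h_i(x,y)\le 0,\ i=1,\dots,k\}$, $y^*(x)=\arg\min_{y\in\mathcal{Y}(x)} g(x,y)$, and $\phi(x)=\min_{y\in y^*(x)} f(x,y)$. For $t>0$ let $\widetilde g_t(x,y)=g(x,y)-t\sum_{i=1}^k\log(-h_i(x,y))$ (defined when all $h_i(x,y)<0$), $y_t^*(x)=\arg\min_y\widetilde g_t(x,y)$ and $\widetilde\phi_t(x)=f(x,y_t^*(x))$. The cosine of the angle between vectors $u,v$ is $\langle u,v\rangle/(\|u\|\|v\|)$. Assumptions: (A1) $f$ is once and $g,h_i$ are twice continuously differentiable; (A2) $\mathcal{X}$ is convex and compact and for every $x\in\mathcal{X}$ there is $y$ with $h_i(x,y)<0$ for all $i$; (LIN) for every $x\in\mathcal{X}$, $g(x,\cdot)$ and all $h_i(x,\cdot)$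 are linear (affine) in $y$ and $\mathcal{Y}(x)$ is compact. *)

theory Defs
  imports "HOL-Analysis.Analysis"
begin

definition C1_fun :: "('z::euclidean_space \<Rightarrow> real) \<Rightarrow> bool" where
  "C1_fun F \<longleftrightarrow> (\<exists>D :: 'z \<Rightarrow> ('z \<Rightarrow>\<^sub>L real).
      (\<forall>z. (F has_derivative blinfun_apply (D z)) (at z)) \<and> continuous_on UNIV D)"

definition C2_fun :: "('z::euclidean_space \<Rightarrow> real) \<Rightarrow> bool" where
  "C2_fun F \<longleftrightarrow> (\<exists>(D :: 'z \<Rightarrow> ('z \<Rightarrow>\<^sub>L real)) (D2 :: 'z \<Rightarrow> ('z \<Rightarrow>\<^sub>L ('z \<Rightarrow>\<^sub>L real))).
      (\<forall>z. (F has_derivative blinfun_apply (D z)) (at z)) \<and>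
      (\<forall>z. (D has_derivative blinfun_apply (D2 z)) (at z)) \<and> continuous_on UNIV D2)"

definition uncurry2 :: "('a \<Rightarrow> 'b \<Rightarrow> real) \<Rightarrow> 'a \<times> 'b \<Rightarrow> real" where
  "uncurry2 F z = F (fst z) (snd z)"

text \<open>Affine (linear in the sense of the paper) real function.\<close>
definition affine_fun :: "('b::real_inner \<Rightarrow> real) \<Rightarrow> bool" where
  "affine_fun \<psi> \<longleftrightarrow> (\<exists>c d. \<forall>y. \<psi> y = inner c y + d)"

definition Yset :: "nat \<Rightarrow> (nat \<Rightarrow> 'a \<Rightarrow> 'b \<Rightarrow> real) \<Rightarrow> 'a \<Rightarrow> 'b set" where
  "Yset k h x = {y. \<forall>i<k. h i x y \<le> 0}"

definition ystar :: "('a \<Rightarrow> 'b \<Rightarrow> real) \<Rightarrow> nat \<Rightarrow> (nat \<Rightarrow> 'a \<Rightarrow> 'b \<Rightarrow> real) \<Rightarrow> 'a \<Rightarrow> 'b set" where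
  "ystar g k h x = {y \<in> Yset k h x. \<forall>y'\<in>Yset k h x. g x y \<le> g x y'}"

definition phi :: "('a \<Rightarrow> 'b \<Rightarrow> real) \<Rightarrow> ('a \<Rightarrow> 'b \<Rightarrow> real) \<Rightarrow> nat \<Rightarrow> (nat \<Rightarrow> 'a \<Rightarrow> 'b \<Rightarrow> real) \<Rightarrow> 'a \<Rightarrow> real" where
  "phi f g k h x = (INF y\<in>ystar g k h x. f x y)"

text \<open>Log-barrier function (meaningful on the strict interior) and its minimizer set y_t*(x).\<close>
definition gbar :: "('a \<Rightarrow> 'b \<Rightarrow> real) \<Rightarrow> nat \<Rightarrow> (nat \<Rightarrow> 'a \<Rightarrow> 'b \<Rightarrow> real) \<Rightarrow> real \<Rightarrow> 'a \<Rightarrow> 'b \<Rightarrow> real" where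
  "gbar g k h t x y = g x y - t * (\<Sum>i<k. ln (- h i x y))"

definition strict_dom :: "nat \<Rightarrow> (nat \<Rightarrow> 'a \<Rightarrow> 'b \<Rightarrow> real) \<Rightarrow> 'a \<Rightarrow> 'b set" where
  "strict_dom k h x = {y. \<forall>i<k. h i x y < 0}"

definition ystar_t :: "('a \<Rightarrow> 'b \<Rightarrow> real) \<Rightarrow> nat \<Rightarrow> (nat \<Rightarrow> 'a \<Rightarrow> 'b \<Rightarrow> real) \<Rightarrow> real \<Rightarrow> 'a \<Rightarrow> 'b set" where
  "ystar_t g k h t x = {y \<in> strict_dom k h x. \<forall>y'\<in>strict_dom k h x. gbar g k h t x y \<le> gbar g k h t x y'}"

definition grad_y :: "('a \<Rightarrow> 'b::real_inner \<Rightarrow> real) \<Rightarrow> 'a \<Rightarrow> 'b \<Rightarrow> 'b" where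
  "grad_y g x y = (THE D. GDERIV (g x) y :> D)"

definition cos_angle :: "'b::real_inner \<Rightarrow> 'b \<Rightarrow> real" where
  "cos_angle u v = inner u v / (norm u * norm v)"

text \<open>tau(x) for the unique lower-level solution ys.\<close>
definition tau :: "('a \<Rightarrow> 'b::real_inner \<Rightarrow> real) \<Rightarrow> nat \<Rightarrow> (nat \<Rightarrow> 'a \<Rightarrow> 'b \<Rightarrow> real) \<Rightarrow> 'a \<Rightarrow> 'b \<Rightarrow> real" where
  "tau g k h x ys = (INF y\<in>Yset k h x - {ys}. cos_angle (grad_y g x ys) (y - ys))"

end

theory Submission
  imports Defs
begin

text \<open>
  For fixed \<open>x\<close> the lower-level problem is a linear program \<open>min \<langle>c, y\<rangle>\<close> over the polytope
  \<open>Y(x)\<close>. A unique LP solution \<open>y\<^sup>*\<close> is a sharp minimum: every unit direction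
  \<open>d\<close> pointing from \<open>y\<^sup>*\<close> into \<open>Y(x)\<close> lies in a compact set on which \<open>\<langle>c, d\<rangle>\<close> is positive,
  hence bounded below by some \<open>m > 0\<close>; this gives \<open>\<tau>(x) \<ge> m / \<parallel>c\<parallel> > 0\<close> and
  \<open>\<tau>(x) \<parallel>c\<parallel> \<parallel>y - y\<^sup>*\<parallel> \<le> \<langle>c, y - y\<^sup>*\<rangle>\<close> on \<open>Y(x)\<close>.
  On the other hand, comparing the barrier minimiser \<open>y\<^sub>t\<close> with the points
  \<open>(1 - s) y\<^sub>t + s y\<^sup>*\<close> shows the classical duality-gap bound
  \<open>g(x, y\<^sub>t) - g(x, y\<^sup>*) \<le> k t\<close>. Together they bound \<open>\<parallel>y\<^sub>t - y\<^sup>*\<parallel>\<close>, and the Lipschitz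
  continuity of \<open>f\<close> finishes the proof.
\<close>

lemma affine_fun_along_line:
  assumes "affine_fun \<psi>"
  shows "\<psi> (y + s *\<^sub>R d) = \<psi> y + s * (\<psi> (y + d) - \<psi> y)"
  using assms unfolding affine_fun_def
  by (auto simp: inner_add_right algebra_simps)

lemma continuous_on_affine_fun:
  assumes "affine_fun \<psi>" and "continuous_on S f"
  shows "continuous_on S (\<lambda>z. \<psi> (f z))"
proof -
  obtain c d where "\<And>y. \<psi> y = inner c y + d"
    using assms(1) unfolding affine_fun_def by blast
  then show ?thesis
    using assms(2) by (simp add: continuous_intros)
qed

lemma affine_fun_convex_on:
  assumes "affine_fun \<psi>"
  shows "convex_on UNIV \<psi>"
proof (rule convex_onI)
  fix t y z
  obtain c d where "\<And>y. \<psi> y = inner c y + d"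
    using assms unfolding affine_fun_def by blast
  then show "\<psi> ((1 - t) *\<^sub>R y + t *\<^sub>R z) \<le> (1 - t) * \<psi> y + t * \<psi> z"
    by (simp add: inner_add_right algebra_simps)
qed simp

lemma gderiv_unique:
  assumes "GDERIV f y :> D" and "GDERIV f y :> D'"
  shows "D = D'"
proof -
  have "(\<lambda>v. inner v D) = (\<lambda>v. inner v D')"
    using assms unfolding gderiv_def by (rule has_derivative_unique)
  then show ?thesis
    by (metis vector_eq_ldot)
qed

lemma grad_y_affine:
  assumes "\<And>y. g x y = inner c y + d"
  shows "grad_y g x y = c"
proof -
  have "GDERIV (g x) y :> c"
    unfolding gderiv_def assms
    by (auto intro!: derivative_eq_intros simp: inner_commute)
  then show ?thesis
    unfolding grad_y_def by (blast intro: gderiv_unique)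
qed

lemma lipschitz_uncurry2_slice:
  assumes "lipschitz_on L UNIV (uncurry2 f)"
  shows "\<bar>f x y - f x y'\<bar> \<le> L * norm (y - y')"
proof -
  have "dist (uncurry2 f (x, y)) (uncurry2 f (x, y')) \<le> L * dist (x, y) (x, y')"
    using assms by (rule lipschitz_onD) auto
  then show ?thesis
    by (simp add: uncurry2_def dist_Pair_Pair dist_real_def dist_norm)
qed

lemma ystar_singleton_strict_min:
  assumes "ystar g k h x = {ys}"
  shows "ys \<in> Yset k h x" and "\<And>y. y \<in> Yset k h x \<Longrightarrow> y \<noteq> ys \<Longrightarrow> g x ys < g x y"
proof -
  have ys_min: "ys \<in> Yset k h x \<and> (\<forall>y\<in>Yset k h x. g x ys \<le> g x y)"
    using assms unfolding ystar_def by auto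
  then show "ys \<in> Yset k h x"
    by blast
  show "g x ys < g x y" if "y \<in> Yset k h x" "y \<noteq> ys" for y
  proof (rule ccontr)
    assume "\<not> g x ys < g x y"
    then have "y \<in> ystar g k h x"
      unfolding ystar_def using that ys_min by force
    then show False
      using assms that by blast
  qed
qed

lemma strict_dom_subset_Yset: "strict_dom k h x \<subseteq> Yset k h x"
  unfolding strict_dom_def Yset_def by (auto intro: less_imp_le)

lemma ystar_t_subset_Yset: "ystar_t g k h t x \<subseteq> Yset k h x"
  using strict_dom_subset_Yset[of k h x] unfolding ystar_t_def by blast

lemma feasible_direction_Yset:
  assumes aff: "\<forall>i<k. affine_fun (h i x)"
    and y: "y \<in> Yset k h x"
    and active: "\<forall>i<k. h i x y = 0 \<longrightarrow> h i x (y + d) \<le> 0"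
  shows "\<exists>e>0. y + e *\<^sub>R d \<in> Yset k h x"
proof -
  have "\<forall>\<^sub>F e in at_right 0. h i x (y + e *\<^sub>R d) \<le> 0" if i: "i < k" for i
  proof -
    have line: "h i x (y + e *\<^sub>R d) = h i x y + e * (h i x (y + d) - h i x y)" for e
      using aff i by (simp add: affine_fun_along_line)
    show ?thesis
    proof (cases "h i x y = 0")
      case True
      show ?thesis
        using eventually_at_right_less[of 0]
        by eventually_elim (use True active i in \<open>simp add: line mult_nonneg_nonpos\<close>)
    next
      case False
      then have "h i x y < 0"
        using y i unfolding Yset_def by fastforce
      moreover have "((\<lambda>e. h i x (y + e *\<^sub>R d)) \<longlongrightarrow> h i x y) (at_right 0)"
        unfolding line by (auto intro!: tendsto_eq_intros)
      ultimately have "\<forall>\<^sub>F e in at_right 0. h i x (y + e *\<^sub>R d) < 0"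
        by (simp add: order_tendstoD(2))
      then show ?thesis
        by eventually_elim simp
    qed
  qed
  then have "\<forall>\<^sub>F e in at_right 0. \<forall>i\<in>{..<k}. h i x (y + e *\<^sub>R d) \<le> 0"
    by (intro eventually_ball_finite) auto
  then have "\<forall>\<^sub>F e in at_right 0. 0 < e \<and> y + e *\<^sub>R d \<in> Yset k h x"
    using eventually_at_right_less[of 0] unfolding Yset_def
    by eventually_elim auto
  then show ?thesis
    using eventually_happens'[OF trivial_limit_at_right_real] by blast
qed

lemma Yset_not_singleton:
  fixes h :: "nat \<Rightarrow> 'a \<Rightarrow> 'b::{real_inner,perfect_space} \<Rightarrow> real"
  assumes aff: "\<forall>i<k. affine_fun (h i x)"
    and slater: "\<exists>y. \<forall>i<k. h i x y < 0"
  shows "Yset k h x - {ys} \<noteq> {}"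
proof
  assume "Yset k h x - {ys} = {}"
  moreover note strict_dom_subset_Yset[of k h x]
  moreover have "strict_dom k h x \<noteq> {}"
    using slater unfolding strict_dom_def by auto
  ultimately have "strict_dom k h x = {ys}"
    by blast
  moreover have "open (strict_dom k h x)"
  proof -
    have "strict_dom k h x = (\<Inter>i<k. {y. h i x y < 0})"
      unfolding strict_dom_def by auto
    also have "open \<dots>"
      using aff
      by (intro open_INT ballI open_Collect_less continuous_on_const
          continuous_on_affine_fun[OF _ continuous_on_id]) auto
    finally show ?thesis .
  qed
  ultimately show False
    using not_open_singleton by metis
qed

lemma compact_inner_pos_uniformly:
  assumes "compact K" and "\<forall>d\<in>K. inner c d > 0"
  shows "\<exists>m>0. \<forall>d\<in>K. m \<le> inner c d"
proof (cases "K = {}")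
  case False
  have "continuous_on K (inner c)"
    by (intro continuous_intros)
  then obtain d0 where "d0 \<in> K" "\<forall>d\<in>K. inner c d0 \<le> inner c d"
    using continuous_attains_inf[OF \<open>compact K\<close> False] by blast
  then show ?thesis
    using assms(2) by blast
qed (auto intro: exI[of _ 1])

lemma unique_minimizer_linear_growth:
  fixes c ys :: "'b::euclidean_space"
  assumes aff: "\<forall>i<k. affine_fun (h i x)"
    and ys: "ys \<in> Yset k h x"
    and unique: "\<And>y. y \<in> Yset k h x \<Longrightarrow> y \<noteq> ys \<Longrightarrow> inner c ys < inner c y"
  shows "\<exists>m>0. \<forall>y\<in>Yset k h x. m * norm (y - ys) \<le> inner c (y - ys)"
proof -
  define K where
    "K = sphere 0 1 \<inter> (\<Inter>i\<in>{i. i < k \<and> h i x ys = 0}. {d. h i x (ys + d) \<le> 0})"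
  have "closed (\<Inter>i\<in>{i. i < k \<and> h i x ys = 0}. {d. h i x (ys + d) \<le> 0})"
    using aff
    by (intro closed_INT ballI closed_Collect_le continuous_on_const
        continuous_on_affine_fun[OF _ continuous_on_add[OF continuous_on_const continuous_on_id]]) auto
  then have "compact K"
    unfolding K_def by (simp add: compact_Int_closed)
  have positive: "inner c d > 0" if "d \<in> K" for d
  proof -
    obtain e where "e > 0" and "ys + e *\<^sub>R d \<in> Yset k h x"
      using feasible_direction_Yset[OF aff ys] \<open>d \<in> K\<close> unfolding K_def by blast
    moreover have "d \<noteq> 0"
      using \<open>d \<in> K\<close> unfolding K_def by auto
    ultimately have "inner c ys < inner c (ys + e *\<^sub>R d)"
      by (intro unique) auto
    then show ?thesis
      using \<open>e > 0\<close> by (simp add: inner_add_right zero_less_mult_iff)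
  qed
  obtain m where "m > 0" and m: "\<forall>d\<in>K. m \<le> inner c d"
    using compact_inner_pos_uniformly[OF \<open>compact K\<close>] positive by blast
  have "m * norm (y - ys) \<le> inner c (y - ys)" if y: "y \<in> Yset k h x" for y
  proof (cases "y = ys")
    case False
    define d where "d = (1 / norm (y - ys)) *\<^sub>R (y - ys)"
    have "h i x (ys + d) \<le> 0" if "i < k" "h i x ys = 0" for i
    proof -
      have "h i x (ys + d) = h i x y / norm (y - ys)"
        using aff that unfolding d_def by (simp add: affine_fun_along_line)
      also have "\<dots> \<le> 0"
        using y that unfolding Yset_def by (simp add: divide_nonpos_nonneg)
      finally show ?thesis .
    qed
    then have "d \<in> K"
      using False unfolding K_def d_def by simp
    then have "m \<le> inner c (y - ys) / norm (y - ys)"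
      using m unfolding d_def by auto
    then show ?thesis
      using False by (simp add: pos_le_divide_eq)
  qed simp
  then show ?thesis
    using \<open>m > 0\<close> by blast
qed

lemma tau_linear_growth:
  assumes grad: "grad_y g x ys = c"
    and not_singleton: "Yset k h x - {ys} \<noteq> {}"
    and "m > 0"
    and growth: "\<forall>y\<in>Yset k h x. m * norm (y - ys) \<le> inner c (y - ys)"
  shows "c \<noteq> 0" and "tau g k h x ys > 0"
    and "\<And>y. y \<in> Yset k h x \<Longrightarrow> tau g k h x ys * norm c * norm (y - ys) \<le> inner c (y - ys)"
proof -
  obtain y0 where y0: "y0 \<in> Yset k h x" "y0 \<noteq> ys"
    using not_singleton by blast
  then have "0 < m * norm (y0 - ys)"
    using \<open>m > 0\<close> by simp
  also have "\<dots> \<le> inner c (y0 - ys)"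
    using growth y0 by blast
  finally show "c \<noteq> 0"
    by auto
  then have "norm c > 0"
    by simp
  have cos_ge: "m / norm c \<le> cos_angle c (y - ys)" if "y \<in> Yset k h x - {ys}" for y
  proof -
    have "m / norm c * (norm c * norm (y - ys)) \<le> inner c (y - ys)"
      using growth that \<open>norm c > 0\<close> by simp
    then show ?thesis
      using that \<open>norm c > 0\<close> unfolding cos_angle_def by (simp add: pos_le_divide_eq)
  qed
  have tau_eq: "tau g k h x ys = (INF y\<in>Yset k h x - {ys}. cos_angle c (y - ys))"
    unfolding tau_def grad ..
  have "m / norm c \<le> tau g k h x ys"
    unfolding tau_eq using not_singleton cos_ge by (rule cINF_greatest)
  then show "tau g k h x ys > 0"
    using \<open>m > 0\<close> \<open>norm c > 0\<close> by (meson divide_pos_pos less_le_trans)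
  show "tau g k h x ys * norm c * norm (y - ys) \<le> inner c (y - ys)" if "y \<in> Yset k h x" for y
  proof (cases "y = ys")
    case False
    have "tau g k h x ys \<le> cos_angle c (y - ys)"
      unfolding tau_eq
      by (rule cINF_lower) (use False that in \<open>auto intro: bdd_belowI2 cos_ge\<close>)
    then show ?thesis
      using False \<open>norm c > 0\<close> unfolding cos_angle_def by (simp add: pos_le_divide_eq mult.assoc)
  qed simp
qed

lemma barrier_minimizer_gap:
  assumes convex_g: "convex_on UNIV (g x)"
    and convex_h: "\<forall>i<k. convex_on UNIV (h i x)"
    and "t > 0"
    and yt: "yt \<in> ystar_t g k h t x"
    and y: "y \<in> Yset k h x"
  shows "g x yt - g x y \<le> real k * t"
proof -
  have yt_strict: "\<forall>i<k. h i x yt < 0"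
    and yt_min: "\<And>z. z \<in> strict_dom k h x \<Longrightarrow> gbar g k h t x yt \<le> gbar g k h t x z"
    using yt unfolding ystar_t_def strict_dom_def by auto
  have shrunk: "(g x yt - g x y) * (1 - s) \<le> real k * t" if "0 < s" "s < 1" for s
  proof -
    define z where "z = (1 - s) *\<^sub>R yt + s *\<^sub>R y"
    have h_z: "(1 - s) * - h i x yt \<le> - h i x z" if "i < k" for i
    proof -
      have "h i x z \<le> (1 - s) * h i x yt + s * h i x y"
        unfolding z_def using convex_h that \<open>0 < s\<close> \<open>s < 1\<close> by (intro convex_onD) auto
      moreover have "s * h i x y \<le> 0"
        using y that \<open>0 < s\<close> unfolding Yset_def by (simp add: mult_nonneg_nonpos)
      ultimately show ?thesis
        by linarith
    qed
    have h_yt_pos: "0 < (1 - s) * - h i x yt" if "i < k" for i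
      using yt_strict that \<open>s < 1\<close> by (simp add: mult_pos_neg)
    have "z \<in> strict_dom k h x"
      unfolding strict_dom_def using h_z h_yt_pos by (fastforce dest: less_le_trans)
    then have "g x yt - t * (\<Sum>i<k. ln (- h i x yt)) \<le> g x z - t * (\<Sum>i<k. ln (- h i x z))"
      using yt_min unfolding gbar_def by blast
    moreover have "g x z \<le> (1 - s) * g x yt + s * g x y"
      unfolding z_def using convex_g \<open>0 < s\<close> \<open>s < 1\<close> by (intro convex_onD) auto
    moreover have "t * (\<Sum>i<k. ln (- h i x yt)) + t * real k * ln (1 - s) \<le> t * (\<Sum>i<k. ln (- h i x z))"
    proof -
      have "ln (- h i x yt) + ln (1 - s) \<le> ln (- h i x z)" if "i < k" for i
      proof -
        have "ln (- h i x yt) + ln (1 - s) = ln ((1 - s) * - h i x yt)"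
          using yt_strict that \<open>s < 1\<close> by (subst ln_mult) auto
        also have "\<dots> \<le> ln (- h i x z)"
          using h_z[OF that] h_yt_pos[OF that] by (simp add: ln_le_cancel_iff)
        finally show ?thesis .
      qed
      then have "(\<Sum>i<k. ln (- h i x yt) + ln (1 - s)) \<le> (\<Sum>i<k. ln (- h i x z))"
        by (intro sum_mono) simp
      then have "t * ((\<Sum>i<k. ln (- h i x yt)) + real k * ln (1 - s)) \<le> t * (\<Sum>i<k. ln (- h i x z))"
        using \<open>t > 0\<close> by (intro mult_left_mono) (simp_all add: sum.distrib)
      then show ?thesis
        by (simp add: distrib_left mult.assoc)
    qed
    ultimately have "s * (g x yt - g x y) \<le> t * real k * - ln (1 - s)"
      by (simp add: algebra_simps)
    also have "\<dots> \<le> t * real k * (s / (1 - s))"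
      using ln_le_minus_one[of "1 / (1 - s)"] \<open>0 < s\<close> \<open>s < 1\<close> \<open>t > 0\<close>
      by (intro mult_left_mono) (simp_all add: ln_div field_simps)
    finally have "s * (g x yt - g x y) \<le> s * (real k * t / (1 - s))"
      by (simp add: mult.commute)
    then have "g x yt - g x y \<le> real k * t / (1 - s)"
      using \<open>0 < s\<close> by (simp only: mult_le_cancel_left_pos)
    then show ?thesis
      using \<open>s < 1\<close> by (simp add: pos_le_divide_eq)
  qed
  have "((\<lambda>s. (g x yt - g x y) * (1 - s)) \<longlongrightarrow> (g x yt - g x y) * (1 - 0)) (at_right 0)"
    by (intro tendsto_intros)
  moreover have "\<forall>\<^sub>F s in at_right 0. (g x yt - g x y) * (1 - s) \<le> real k * t"
    by (rule eventually_at_rightI[of _ 1]) (auto intro: shrunk)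
  ultimately show ?thesis
    using tendsto_upperbound by fastforce
qed

theorem theorem2:
  fixes f g :: "real^'n \<Rightarrow> real^'m \<Rightarrow> real"
    and h :: "nat \<Rightarrow> real^'n \<Rightarrow> real^'m \<Rightarrow> real"
    and k :: nat and X :: "(real^'n) set"
    and Lf :: real and x :: "real^'n" and ys :: "real^'m"
  assumes A1_f: "C1_fun (uncurry2 f)"
    and A1_g: "C2_fun (uncurry2 g)"
    and A1_h: "\<forall>i<k. C2_fun (uncurry2 (h i))"
    and A2_X: "convex X" "compact X"
    and A2_slater: "\<forall>x\<in>X. \<exists>y. \<forall>i<k. h i x y < 0"
    and LIN: "\<forall>x\<in>X. affine_fun (g x) \<and> (\<forall>i<k. affine_fun (h i x)) \<and> compact (Yset k h x)"
    and Lip: "lipschitz_on Lf UNIV (uncurry2 f)"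
    and hx: "x \<in> X"
    and single: "ystar g k h x = {ys}"
  shows "tau g k h x ys > 0 \<and>
    (\<forall>t>0. \<forall>yt\<in>ystar_t g k h t x.
       \<bar>f x yt - phi f g k h x\<bar> \<le> Lf * (real k * t) / (tau g k h x ys * norm (grad_y g x ys)))"
proof -
  have aff_g: "affine_fun (g x)" and aff_h: "\<forall>i<k. affine_fun (h i x)"
    using LIN hx by auto
  then obtain c d where g_eq: "\<And>y. g x y = inner c y + d"
    unfolding affine_fun_def by blast
  have grad: "grad_y g x ys = c"
    using g_eq by (rule grad_y_affine)
  have ys: "ys \<in> Yset k h x"
    and unique: "\<And>y. y \<in> Yset k h x \<Longrightarrow> y \<noteq> ys \<Longrightarrow> inner c ys < inner c y"
    using ystar_singleton_strict_min[OF single] by (simp_all add: g_eq)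
  obtain m where "m > 0" and growth: "\<forall>y\<in>Yset k h x. m * norm (y - ys) \<le> inner c (y - ys)"
    using unique_minimizer_linear_growth[OF aff_h ys unique] by blast
  have not_singleton: "Yset k h x - {ys} \<noteq> {}"
    using aff_h A2_slater hx by (intro Yset_not_singleton) auto
  note tau = tau_linear_growth[OF grad not_singleton \<open>m > 0\<close> growth]
  have "\<bar>f x yt - phi f g k h x\<bar> \<le> Lf * (real k * t) / (tau g k h x ys * norm (grad_y g x ys))"
    if "t > 0" and yt: "yt \<in> ystar_t g k h t x" for t yt
  proof -
    have "inner c (yt - ys) \<le> real k * t"
      using barrier_minimizer_gap[OF affine_fun_convex_on[OF aff_g] _ \<open>t > 0\<close> yt ys] aff_h
      by (simp add: affine_fun_convex_on g_eq inner_diff_right)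
    then have distance: "norm (yt - ys) \<le> real k * t / (tau g k h x ys * norm c)"
      using tau(3)[OF subsetD[OF ystar_t_subset_Yset yt]] tau(1,2) by (simp add: pos_le_divide_eq mult.commute mult.left_commute)
    have "\<bar>f x yt - phi f g k h x\<bar> \<le> Lf * norm (yt - ys)"
      using lipschitz_uncurry2_slice[OF Lip] unfolding phi_def single by simp
    also have "\<dots> \<le> Lf * (real k * t / (tau g k h x ys * norm c))"
      using distance lipschitz_on_nonneg[OF Lip] by (rule mult_left_mono)
    finally show ?thesis
      unfolding grad by simp
  qed
  then show ?thesis
    using tau(2) by blast
qed

end
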